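(* Let $m_X,m_Y,\Omega_X,\Omega_Y,\alpha>0$ and for $\bar\gamma>0$ let $\overline{C}(\bar\gamma)=\mathbb{E}[\log_2(1+\gamma)]$, where $\gamma$ is the instantaneous SNR of the $\alpha$-Beaulieu–Xie shadowed channel with average SNR $\bar\gamma$. Define $$A(\bar\gamma)=\frac{2}{\alpha\ln 2}\left(\ln\!\big(\mathrm{C}_\alpha\bar\gamma^{\alpha/2}\big)+\psi(m_X)+(1-\bar\beta)^{m_Y}\,{}_2F_1^{(1,0,0,0)}(m_X,m_Y;m_X;\bar\beta)\right),$$ where $\psi$ is the digamma function and ${}_2F_1^{(1,0,0,0)}(a,b;c;z)=\frac{\partial}{\partial a}{}_2F_1(a,b;c;z)$. Then $\mathbb{E}[\log_2\gamma]=A(\bar\gamma)$ and $\lim_{\bar\gamma\to\infty}\big(\overline{C}(\bar\gamma)-A(\bar\gamma)\big)=0$.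
   Context: Fix parameters $m_X,m_Y,\Omega_X,\Omega_Y>0$. The Beaulieu–Xie shadowed envelope is a random variable $\bar R>0$ with density $$f_{\bar R}(r)=\frac{2r^{2m_X-1}}{\Gamma(m_X)}\left(\frac{m_Y\Omega_X}{m_Y\Omega_X+m_X\Omega_Y}\right)^{m_Y}\left(\frac{m_X}{\Omega_X}\right)^{m_X}{}_1F_1\!\left(m_Y;m_X;\frac{m_X^2\Omega_Y r^2}{\Omega_X(m_Y\Omega_X+m_X\Omega_Y)}\right)e^{-\frac{m_X}{\Omega_X}r^2},\quad r>0.$$ Set $\bar\beta=\frac{m_X\Omega_Y}{m_Y\Omega_X+m_X\Omega_Y}$. For $\alpha>0$ put $$\mathrm{C}_\alpha=\left[\frac{\Gamma(m_X)}{\Gamma(m_X+\frac{2}{\alpha})\,{}_2F_1\!\left(m_Y,-\frac{2}{\alpha};m_X;-\frac{m_X\Omega_Y}{m_Y\Omega_X}\right)}\right]^{\alpha/2}.$$ For $\bar\gamma>0$, the instantaneous SNR of the $\alpha$-Beaulieu–Xie shadowed channel with average SNR $\bar\gamma$ is the random variable $\gamma=\bar\gamma\,\big(\mathrm{C}_\alpha m_X\bar R^2/\Omega_X\big)^{2/\alpha}$. Here ${}_1F_1(a;b;z)=\sum_{n\ge0}\frac{(a)_n}{(b)_n}\frac{z^n}{n!}$, ${}_2F_1$ is the Gauss hypergeometric function. *)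

theory Defs
  imports "HOL-Analysis.Analysis"
begin

definition hyp1F1 :: "real \<Rightarrow> real \<Rightarrow> real \<Rightarrow> real" where
  "hyp1F1 a b z = (\<Sum>n. pochhammer a n / pochhammer b n * z ^ n / fact n)"

definition hyp2F1_series :: "real \<Rightarrow> real \<Rightarrow> real \<Rightarrow> real \<Rightarrow> real" where
  "hyp2F1_series a b c z =
     (\<Sum>n. pochhammer a n * pochhammer b n / (pochhammer c n * fact n) * z ^ n)"

text \<open>Gauss hypergeometric function on the real half-line z < 1 (principal branch):
  the series for |z| < 1, and for z \<le> -1 the analytic continuation given by the
  Pfaff transformation 2F1(a,b;c;z) = (1-z)^(-a) 2F1(a,c-b;c;z/(z-1)).\<close>
definition hyp2F1 :: "real \<Rightarrow> real \<Rightarrow> real \<Rightarrow> real \<Rightarrow> real" where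
  "hyp2F1 a b c z =
     (if \<bar>z\<bar> < 1 then hyp2F1_series a b c z
      else (1 - z) powr (- a) * hyp2F1_series a (c - b) c (z / (z - 1)))"

definition BX_pdf :: "real \<Rightarrow> real \<Rightarrow> real \<Rightarrow> real \<Rightarrow> real \<Rightarrow> real" where
  "BX_pdf mX mY OX OY r =
     2 * r powr (2 * mX - 1) / Gamma mX
     * (mY * OX / (mY * OX + mX * OY)) powr mY
     * (mX / OX) powr mX
     * hyp1F1 mY mX (mX\<^sup>2 * OY * r\<^sup>2 / (OX * (mY * OX + mX * OY)))
     * exp (- (mX / OX) * r\<^sup>2)"

definition BX_beta :: "real \<Rightarrow> real \<Rightarrow> real \<Rightarrow> real \<Rightarrow> real" where
  "BX_beta mX mY OX OY = mX * OY / (mY * OX + mX * OY)"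

definition C_alpha :: "real \<Rightarrow> real \<Rightarrow> real \<Rightarrow> real \<Rightarrow> real \<Rightarrow> real" where
  "C_alpha mX mY OX OY \<alpha> =
     (Gamma mX / (Gamma (mX + 2 / \<alpha>) * hyp2F1 mY (- 2 / \<alpha>) mX (- (mX * OY) / (mY * OX))))
       powr (\<alpha> / 2)"

definition aBX_snr :: "real \<Rightarrow> real \<Rightarrow> real \<Rightarrow> real \<Rightarrow> real \<Rightarrow> real \<Rightarrow> real \<Rightarrow> real" where
  "aBX_snr mX mY OX OY \<alpha> \<gamma>b r = \<gamma>b * (C_alpha mX mY OX OY \<alpha> * mX * r\<^sup>2 / OX) powr (2 / \<alpha>)"

definition ergodic_capacity :: "real \<Rightarrow> real \<Rightarrow> real \<Rightarrow> real \<Rightarrow> real \<Rightarrow> real \<Rightarrow> real" where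
  "ergodic_capacity mX mY OX OY \<alpha> \<gamma>b =
     (LINT r:{0<..}|lborel. BX_pdf mX mY OX OY r * log 2 (1 + aBX_snr mX mY OX OY \<alpha> \<gamma>b r))"

definition hyp2F1_da :: "real \<Rightarrow> real \<Rightarrow> real \<Rightarrow> real \<Rightarrow> real" where
  "hyp2F1_da a b c z = deriv (\<lambda>t. hyp2F1 t b c z) a"

definition asym_A :: "real \<Rightarrow> real \<Rightarrow> real \<Rightarrow> real \<Rightarrow> real \<Rightarrow> real \<Rightarrow> real" where
  "asym_A mX mY OX OY \<alpha> \<gamma>b =
     2 / (\<alpha> * ln 2) *
       (ln (C_alpha mX mY OX OY \<alpha> * \<gamma>b powr (\<alpha> / 2)) + Digamma mX
        + (1 - BX_beta mX mY OX OY) powr mY * hyp2F1_da mX mY mX (BX_beta mX mY OX OY))"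

end

theory Submission
  imports Defs "HOL-Real_Asymp.Real_Asymp" "HOL-Computational_Algebra.Formal_Power_Series"
begin

(*
  Substituting x = (mX/OX) r^2 turns the envelope density into a Gamma density weighted by
  Kummer's function, g(x) = (1-beta)^mY x^(mX-1) e^(-x) 1F1(mY; mX; beta x) / Gamma(mX).
  Integrating the 1F1 series termwise against the Gamma kernel gives the Mellin moments
  int g(x) x^h dx = (1-beta)^mY Gamma(mX+h)/Gamma(mX) 2F1(mX+h, mY; mX; beta).
  At h = 0 the Gauss series collapses to (1-beta)^(-mY) by the binomial theorem, so g is a
  probability density, and differentiating at h = 0 under the integral sign expresses
  int g(x) ln x dx through Digamma(mX) and the a-derivative of 2F1.  Since log2 of the SNR is
  affine in ln x, this gives E[log2 SNR].  The capacity gap E[log2(1 + 1/SNR)] decreases in the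
  average SNR, so dominated convergence sends it to 0.  Positivity of C_alpha, i.e. of the
  Pfaff continuation of 2F1, comes from Kummer's transformation of 1F1.
*)

section \<open>Hypergeometric series\<close>

lemma summable_ratio_limit:
  fixes f :: "nat \<Rightarrow> real"
  assumes "r \<longlonglongrightarrow> L" "L < 1" "\<And>n. norm (f (Suc n)) = r n * norm (f n)"
  shows "summable f"
proof -
  have "(1 + L) / 2 > L" using assms(2) by simp
  from order_tendstoD(2)[OF assms(1) this]
  obtain N where N: "\<And>n. n \<ge> N \<Longrightarrow> r n < (1 + L) / 2"
    by (auto simp: eventually_sequentially)
  show ?thesis
  proof (rule summable_ratio_test[of "(1 + L) / 2" N])
    show "(1 + L) / 2 < 1" using assms(2) by simp
    fix n assume "n \<ge> N"
    then have "r n * norm (f n) \<le> (1 + L) / 2 * norm (f n)"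
      using N[of n] by (intro mult_right_mono) auto
    then show "norm (f (Suc n)) \<le> (1 + L) / 2 * norm (f n)" by (simp only: assms(3))
  qed
qed

definition hyp1F1_term :: "real \<Rightarrow> real \<Rightarrow> real \<Rightarrow> nat \<Rightarrow> real" where
  "hyp1F1_term a b z n = pochhammer a n / pochhammer b n * z ^ n / fact n"

definition hyp2F1_term :: "real \<Rightarrow> real \<Rightarrow> real \<Rightarrow> real \<Rightarrow> nat \<Rightarrow> real" where
  "hyp2F1_term a b c z n = pochhammer a n * pochhammer b n / (pochhammer c n * fact n) * z ^ n"

lemma hyp1F1_eq_suminf: "hyp1F1 a b z = (\<Sum>n. hyp1F1_term a b z n)"
  unfolding hyp1F1_def hyp1F1_term_def ..

lemma hyp2F1_series_eq_suminf: "hyp2F1_series a b c z = (\<Sum>n. hyp2F1_term a b c z n)"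
  unfolding hyp2F1_series_def hyp2F1_term_def ..

lemma summable_norm_hyp1F1_term:
  assumes "b > 0"
  shows "summable (\<lambda>n. norm (hyp1F1_term a b z n))"
proof (rule summable_ratio_limit)
  show "(\<lambda>n. \<bar>a + real n\<bar> / ((b + real n) * (real n + 1)) * \<bar>z\<bar>) \<longlonglongrightarrow> 0 * \<bar>z\<bar>"
    by (intro tendsto_mult tendsto_const) (use assms in real_asymp)
  fix n
  have "b + real n > 0" using assms by simp
  then have "hyp1F1_term a b z (Suc n) =
      hyp1F1_term a b z n * ((a + real n) / ((b + real n) * (real n + 1)) * z)"
    using pochhammer_pos[OF assms, of n]
    by (simp add: hyp1F1_term_def pochhammer_Suc field_simps)
  then show "norm (norm (hyp1F1_term a b z (Suc n))) =
      \<bar>a + real n\<bar> / ((b + real n) * (real n + 1)) * \<bar>z\<bar> * norm (norm (hyp1F1_term a b z n))"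
    using \<open>b + real n > 0\<close> by (simp add: abs_mult abs_divide)
qed simp

lemma summable_norm_hyp2F1_term:
  assumes "c > 0" "\<bar>z\<bar> < 1"
  shows "summable (\<lambda>n. norm (hyp2F1_term a b c z n))"
proof (rule summable_ratio_limit)
  show "(\<lambda>n. \<bar>a + real n\<bar> * \<bar>b + real n\<bar> / ((c + real n) * (real n + 1)) * \<bar>z\<bar>)
      \<longlonglongrightarrow> 1 * \<bar>z\<bar>"
    by (intro tendsto_mult tendsto_const) (use assms in real_asymp)
  show "1 * \<bar>z\<bar> < 1" using assms by simp
  fix n
  have "c + real n > 0" using assms by simp
  then have "hyp2F1_term a b c z (Suc n) =
      hyp2F1_term a b c z n * ((a + real n) * (b + real n) / ((c + real n) * (real n + 1)) * z)"
    using pochhammer_pos[OF assms(1), of n]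
    by (simp add: hyp2F1_term_def pochhammer_Suc field_simps)
  then show "norm (norm (hyp2F1_term a b c z (Suc n))) =
      \<bar>a + real n\<bar> * \<bar>b + real n\<bar> / ((c + real n) * (real n + 1)) * \<bar>z\<bar>
      * norm (norm (hyp2F1_term a b c z n))"
    using \<open>c + real n > 0\<close> by (simp add: abs_mult abs_divide)
qed

lemma hyp1F1_sums: "b > 0 \<Longrightarrow> hyp1F1_term a b z sums hyp1F1 a b z"
  unfolding hyp1F1_eq_suminf
  by (rule summable_sums, rule summable_norm_cancel, rule summable_norm_hyp1F1_term)

lemma hyp2F1_series_sums:
  "c > 0 \<Longrightarrow> \<bar>z\<bar> < 1 \<Longrightarrow> hyp2F1_term a b c z sums hyp2F1_series a b c z"
  unfolding hyp2F1_series_eq_suminf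
  by (rule summable_sums, rule summable_norm_cancel, rule summable_norm_hyp2F1_term)

lemma hyp1F1_ge_1:
  assumes "a > 0" "b > 0" "z \<ge> 0"
  shows "hyp1F1 a b z \<ge> 1"
proof -
  have "hyp1F1_term a b z n \<ge> 0" for n
    unfolding hyp1F1_term_def
    using pochhammer_pos[OF assms(1), of n] pochhammer_pos[OF assms(2), of n] assms(3)
    by simp
  moreover have "hyp1F1_term a b z sums hyp1F1 a b z" by (rule hyp1F1_sums[OF assms(2)])
  ultimately have "sum (hyp1F1_term a b z) {0} \<le> hyp1F1 a b z"
    by (metis finite.emptyI finite_insert sum_le_suminf sums_iff)
  then show ?thesis by (simp add: hyp1F1_term_def)
qed

lemma hyp2F1_series_ge_1:
  assumes "a > 0" "b > 0" "c > 0" "0 \<le> z" "z < 1"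
  shows "hyp2F1_series a b c z \<ge> 1"
proof -
  have "hyp2F1_term a b c z n \<ge> 0" for n
    unfolding hyp2F1_term_def
    using pochhammer_pos[OF assms(1), of n] pochhammer_pos[OF assms(2), of n]
      pochhammer_pos[OF assms(3), of n] assms(4)
    by simp
  moreover have "hyp2F1_term a b c z sums hyp2F1_series a b c z"
    using assms by (intro hyp2F1_series_sums) auto
  ultimately have "sum (hyp2F1_term a b c z) {0} \<le> hyp2F1_series a b c z"
    by (metis finite.emptyI finite_insert sum_le_suminf sums_iff)
  then show ?thesis by (simp add: hyp2F1_term_def)
qed

lemma hyp2F1_series_diagonal:
  assumes "c > 0" "\<bar>z\<bar> < 1"
  shows "hyp2F1_series c b c z = (1 - z) powr (- b)"
proof -
  have "hyp2F1_term c b c z = (\<lambda>n. ((- b) gchoose n) * (- z) ^ n)"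
  proof
    fix n
    have "pochhammer c n \<noteq> 0" using pochhammer_pos[OF assms(1), of n] by simp
    then have "hyp2F1_term c b c z n = pochhammer b n / fact n * z ^ n"
      by (simp add: hyp2F1_term_def)
    moreover have "((- b) gchoose n) * (- z) ^ n
        = ((- 1) ^ n * (- 1) ^ n) * (pochhammer b n / fact n * z ^ n)"
      unfolding gbinomial_pochhammer power_minus[of z] by simp
    moreover have "(- 1 :: real) ^ n * (- 1) ^ n = 1"
      by (simp flip: power_mult_distrib)
    ultimately show "hyp2F1_term c b c z n = ((- b) gchoose n) * (- z) ^ n" by simp
  qed
  moreover have "(\<lambda>n. ((- b) gchoose n) * (- z) ^ n) sums (1 + (- z)) powr (- b)"
    using assms(2) by (intro gen_binomial_real) simp
  ultimately have "hyp2F1_term c b c z sums (1 - z) powr (- b)" by simp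
  then show ?thesis by (rule sums_unique2[OF hyp2F1_series_sums[OF assms]])
qed

lemma pochhammer_minus_of_nat:
  assumes "i \<le> k"
  shows "pochhammer (- real k) i = (- 1) ^ i * fact k / fact (k - i)"
proof -
  have "pochhammer (- real k) i = (- 1) ^ i * ((real k gchoose i) * fact i)"
    by (simp add: gbinomial_pochhammer)
  also have "real k gchoose i = fact k / (fact i * fact (k - i))"
    by (simp add: binomial_fact[OF assms] flip: binomial_gbinomial)
  finally show ?thesis by simp
qed

lemma hyp1F1_Kummer_coefficient:
  assumes "c > 0"
  shows "(\<Sum>i\<le>k. hyp1F1_term (c - b) c (- y) i * (y ^ (k - i) / fact (k - i)))
       = hyp1F1_term b c y k"
proof -
  have summand: "hyp1F1_term (c - b) c (- y) i * (y ^ (k - i) / fact (k - i))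
      = pochhammer (c - b) i * pochhammer (- real k) i / (fact i * pochhammer c i) * (y ^ k / fact k)"
    if "i \<le> k" for i
  proof -
    have "pochhammer c i \<noteq> 0" using pochhammer_pos[OF assms, of i] by simp
    moreover have "y ^ k = y ^ i * y ^ (k - i)"
      using that by (simp flip: power_add)
    ultimately show ?thesis
      unfolding hyp1F1_term_def pochhammer_minus_of_nat[OF that] power_minus[of y]
      by (simp add: field_simps)
  qed
  have "(\<Sum>i\<le>k. hyp1F1_term (c - b) c (- y) i * (y ^ (k - i) / fact (k - i)))
      = (\<Sum>i\<le>k. pochhammer (c - b) i * pochhammer (- real k) i / (fact i * pochhammer c i)
          * (y ^ k / fact k))"
    by (rule sum.cong[OF refl], rule summand) simp
  also have "\<dots> = (\<Sum>i=0..k. pochhammer (c - b) i * pochhammer (- real k) i / (fact i * pochhammer c i))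
        * (y ^ k / fact k)"
    by (simp only: sum_distrib_right atMost_atLeast0)
  also have "(\<Sum>i=0..k. pochhammer (c - b) i * pochhammer (- real k) i / (fact i * pochhammer c i))
      = pochhammer b k / pochhammer c k"
    using Vandermonde_pochhammer[of k c "c - b"] assms by simp
  finally show ?thesis by (simp add: hyp1F1_term_def)
qed

lemma hyp1F1_Kummer:
  assumes "c > 0"
  shows "hyp1F1 b c y = exp y * hyp1F1 (c - b) c (- y)"
proof -
  have exp_sums: "(\<lambda>k. y ^ k / fact k) sums exp y"
    using exp_converges[of y] by (simp add: divide_inverse mult.commute)
  have "summable (\<lambda>k. norm (y ^ k / fact k))"
    using summable_norm_exp[of y] by (simp add: divide_inverse mult.commute)
  then have "(\<Sum>k. hyp1F1_term (c - b) c (- y) k) * (\<Sum>k. y ^ k / fact k)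
      = (\<Sum>k. \<Sum>i\<le>k. hyp1F1_term (c - b) c (- y) i * (y ^ (k - i) / fact (k - i)))"
    by (rule Cauchy_product[OF summable_norm_hyp1F1_term[OF assms]])
  then have "hyp1F1 (c - b) c (- y) * exp y = hyp1F1 b c y"
    by (simp only: hyp1F1_Kummer_coefficient[OF assms] sums_unique[OF exp_sums, symmetric]
        flip: hyp1F1_eq_suminf)
  then show ?thesis by (simp only: mult.commute)
qed

lemma hyp1F1_pos:
  assumes "c > 0" "b < c" "y \<le> 0"
  shows "hyp1F1 b c y > 0"
proof -
  have "hyp1F1 (c - b) c (- y) \<ge> 1" using hyp1F1_ge_1[of "c - b" c "- y"] assms by simp
  then show ?thesis unfolding hyp1F1_Kummer[OF assms(1), of b y] by simp
qed

section \<open>Integrals against the Gamma kernel\<close>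

lemma set_integral_pos:
  fixes f :: "'a \<Rightarrow> real"
  assumes int: "set_integrable M A f" and A: "A \<in> sets M" "emeasure M A \<noteq> 0"
    and pos: "\<And>x. x \<in> A \<Longrightarrow> f x > 0"
  shows "(LINT x:A|M. f x) > 0"
proof -
  let ?g = "\<lambda>x. indicator A x *\<^sub>R f x"
  have nonneg: "AE x in M. 0 \<le> ?g x"
    by (rule AE_I2) (auto split: split_indicator dest: pos)
  have "integral\<^sup>L M ?g \<noteq> 0"
  proof
    assume "integral\<^sup>L M ?g = 0"
    then have "AE x in M. ?g x = 0"
      using integral_nonneg_eq_0_iff_AE[OF int[unfolded set_integrable_def] nonneg] by simp
    then have "AE x in M. x \<notin> A"
      by eventually_elim (auto split: split_indicator dest: pos)
    then show False
      using A sets.sets_into_space[OF A(1)] by (subst (asm) AE_iff_measurable[OF A(1)]) auto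
  qed
  moreover have "integral\<^sup>L M ?g \<ge> 0" by (rule integral_nonneg_AE[OF nonneg])
  ultimately show ?thesis by (simp add: set_lebesgue_integral_def)
qed

lemma Gamma_as_set_integral:
  fixes s :: real
  assumes "s > 0"
  shows "set_integrable lborel {0<..} (\<lambda>x. x powr (s - 1) * exp (- x))"
    and "(LINT x:{0<..}|lborel. x powr (s - 1) * exp (- x)) = Gamma s"
proof -
  let ?f = "\<lambda>x::real. x powr (s - 1) * exp (- x)"
  have "(?f has_integral Gamma s) {0..}"
    using Gamma_integral_real[OF assms] by (simp add: exp_minus divide_inverse)
  then have "((\<lambda>x. if x \<in> {0<..} then ?f x else 0) has_integral Gamma s) {0..}"
    by (rule has_integral_spike[of "{0}", rotated 2]) auto
  then have int: "(?f has_integral Gamma s) {0<..}"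
    by (subst (asm) has_integral_restrict) auto
  then have "?f absolutely_integrable_on {0<..}"
    by (intro nonnegative_absolutely_integrable_1) auto
  then show si: "set_integrable lborel {0<..} ?f"
    unfolding set_integrable_def by (simp add: integrable_completion)
  show "(LINT x:{0<..}|lborel. ?f x) = Gamma s"
    using set_borel_integral_eq_integral(2)[OF si] int by (simp add: integral_unique)
qed

lemma Gamma_add_of_nat:
  assumes "z > 0"
  shows "Gamma (z + real n) = Gamma z * pochhammer z n"
proof -
  have "z \<notin> \<int>\<^sub>\<le>\<^sub>0" using assms by (auto elim!: nonpos_Ints_cases)
  then have "pochhammer z n = Gamma (z + real n) / Gamma z" by (rule pochhammer_Gamma)
  then show ?thesis using Gamma_real_pos[OF assms] by simp
qed

lemma set_integral_Gamma_hyp1F1_term: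
  assumes p: "p > 0" and c: "c > 0"
  shows "set_integrable lborel {0<..} (\<lambda>y. y powr (p - 1) * exp (- y) * hyp1F1_term q c (z * y) n)"
    and "(LINT y:{0<..}|lborel. y powr (p - 1) * exp (- y) * hyp1F1_term q c (z * y) n)
         = Gamma p * hyp2F1_term p q c z n"
    and "(LINT y:{0<..}|lborel. \<bar>y powr (p - 1) * exp (- y) * hyp1F1_term q c (z * y) n\<bar>)
         = Gamma p * \<bar>hyp2F1_term p q c z n\<bar>"
proof -
  define K where "K = pochhammer q n * z ^ n / (pochhammer c n * fact n)"
  let ?kernel = "\<lambda>y. y powr (p + real n - 1) * exp (- y)"
  have eq: "y powr (p - 1) * exp (- y) * hyp1F1_term q c (z * y) n = K * ?kernel y"
    if "y \<in> {0<..}" for y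
  proof -
    have "y powr (p + real n - 1) = y powr ((p - 1) + real n)" by (simp add: algebra_simps)
    also have "\<dots> = y powr (p - 1) * y ^ n" using that by (simp add: powr_add powr_realpow)
    finally show ?thesis by (simp add: K_def hyp1F1_term_def power_mult_distrib)
  qed
  have kernel: "set_integrable lborel {0<..} ?kernel" "(LINT y:{0<..}|lborel. ?kernel y) = Gamma (p + real n)"
    using Gamma_as_set_integral[of "p + real n"] p by simp_all
  have K_Gamma: "K * Gamma (p + real n) = Gamma p * hyp2F1_term p q c z n"
    using pochhammer_pos[OF c, of n] by (simp add: K_def hyp2F1_term_def Gamma_add_of_nat[OF p])
  show "set_integrable lborel {0<..} (\<lambda>y. y powr (p - 1) * exp (- y) * hyp1F1_term q c (z * y) n)"
    using set_integrable_mult_right[OF kernel(1), of K]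
    by (rule set_integrable_cong[THEN iffD2, rotated 3]) (simp_all add: eq)
  have "(LINT y:{0<..}|lborel. y powr (p - 1) * exp (- y) * hyp1F1_term q c (z * y) n)
      = (LINT y:{0<..}|lborel. K * ?kernel y)"
    by (rule set_lebesgue_integral_cong) (simp_all add: eq)
  then show "(LINT y:{0<..}|lborel. y powr (p - 1) * exp (- y) * hyp1F1_term q c (z * y) n)
      = Gamma p * hyp2F1_term p q c z n"
    using kernel(2) K_Gamma by simp
  have "(LINT y:{0<..}|lborel. \<bar>y powr (p - 1) * exp (- y) * hyp1F1_term q c (z * y) n\<bar>)
      = (LINT y:{0<..}|lborel. \<bar>K\<bar> * ?kernel y)"
    by (rule set_lebesgue_integral_cong) (simp_all add: eq abs_mult)
  also have "\<dots> = \<bar>K * Gamma (p + real n)\<bar>"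
    using kernel(2) Gamma_real_pos[of "p + real n"] p by (simp add: abs_mult)
  finally show "(LINT y:{0<..}|lborel. \<bar>y powr (p - 1) * exp (- y) * hyp1F1_term q c (z * y) n\<bar>)
      = Gamma p * \<bar>hyp2F1_term p q c z n\<bar>"
    using K_Gamma Gamma_real_pos[OF p] by (simp add: abs_mult)
qed

lemma set_integral_Gamma_hyp1F1:
  assumes p: "p > 0" and c: "c > 0" and z: "\<bar>z\<bar> < 1"
  shows "set_integrable lborel {0<..} (\<lambda>y. y powr (p - 1) * exp (- y) * hyp1F1 q c (z * y))"
    and "(LINT y:{0<..}|lborel. y powr (p - 1) * exp (- y) * hyp1F1 q c (z * y))
         = Gamma p * hyp2F1_series p q c z"
proof -
  define v where "v n y = indicator {0<..} y *\<^sub>R (y powr (p - 1) * exp (- y) * hyp1F1_term q c (z * y) n)"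
    for n y
  define F where "F y = indicator {0<..} y *\<^sub>R (y powr (p - 1) * exp (- y) * hyp1F1 q c (z * y))"
    for y
  note termwise = set_integral_Gamma_hyp1F1_term[OF p c]
  have v_int: "integrable lborel (v n)" for n
    using termwise(1) unfolding v_def set_integrable_def .
  have v_integral: "integral\<^sup>L lborel (v n) = Gamma p * hyp2F1_term p q c z n" for n
    using termwise(2) unfolding v_def set_lebesgue_integral_def .
  have norm_integral:
    "integral\<^sup>L lborel (\<lambda>y. norm (v n y)) = Gamma p * norm (hyp2F1_term p q c z n)" for n
    using termwise(3)[of q z n] unfolding v_def set_lebesgue_integral_def
    by (simp add: abs_mult)
  have summable_integrals: "summable (\<lambda>n. integral\<^sup>L lborel (\<lambda>y. norm (v n y)))"
    unfolding norm_integral by (intro summable_mult summable_norm_hyp2F1_term c z)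
  have v_sums: "(\<lambda>n. v n y) sums F y" for y
    unfolding v_def F_def scaleR_conv_of_real mult.assoc
    by (intro sums_mult hyp1F1_sums c)
  have "summable (\<lambda>n. norm (v n y))" for y
    using summable_mult[OF summable_norm_hyp1F1_term[OF c, of q "z * y"],
        of "\<bar>indicator {0<..} y * (y powr (p - 1) * exp (- y))\<bar>"]
    by (simp add: v_def abs_mult mult_ac)
  then have AE_summable: "AE y in lborel. summable (\<lambda>n. norm (v n y))" by simp
  have suminf_v: "(\<lambda>y. \<Sum>n. v n y) = F"
    using v_sums by (auto simp: sums_iff)
  show "set_integrable lborel {0<..} (\<lambda>y. y powr (p - 1) * exp (- y) * hyp1F1 q c (z * y))"
    using integrable_suminf[OF v_int AE_summable summable_integrals]
    unfolding suminf_v set_integrable_def F_def .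
  have "(LINT y:{0<..}|lborel. y powr (p - 1) * exp (- y) * hyp1F1 q c (z * y))
      = (\<Sum>n. integral\<^sup>L lborel (v n))"
    using integral_suminf[OF v_int AE_summable summable_integrals]
    unfolding suminf_v set_lebesgue_integral_def F_def by simp
  also have "\<dots> = Gamma p * hyp2F1_series p q c z"
    unfolding v_integral using sums_mult[OF hyp2F1_series_sums[OF c z], of "Gamma p" p q]
    by (simp add: sums_iff)
  finally show "(LINT y:{0<..}|lborel. y powr (p - 1) * exp (- y) * hyp1F1 q c (z * y))
      = Gamma p * hyp2F1_series p q c z" .
qed

lemma hyp2F1_series_pos:
  assumes p: "p > 0" and c: "c > 0" and "q < c" "- 1 < z" "z \<le> 0"
  shows "hyp2F1_series p q c z > 0"
proof -
  have z: "\<bar>z\<bar> < 1" using assms by simp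
  have "0 < (LINT y:{0<..}|lborel. y powr (p - 1) * exp (- y) * hyp1F1 q c (z * y))"
  proof (rule set_integral_pos[OF set_integral_Gamma_hyp1F1(1)[OF p c z]])
    fix y :: real assume "y \<in> {0<..}"
    moreover have "hyp1F1 q c (z * y) > 0"
      using \<open>y \<in> {0<..}\<close> assms by (intro hyp1F1_pos) (auto simp: mult_nonpos_nonneg)
    ultimately show "y powr (p - 1) * exp (- y) * hyp1F1 q c (z * y) > 0" by simp
  next
    have "emeasure lborel {0<..1::real} \<le> emeasure lborel {0::real<..}" by (rule emeasure_mono) auto
    then show "emeasure lborel {0::real<..} \<noteq> 0" by auto
  qed simp
  then show ?thesis
    unfolding set_integral_Gamma_hyp1F1(2)[OF p c z] using Gamma_real_pos[OF p]
    by (simp add: zero_less_mult_iff)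
qed

lemma hyp2F1_pos:
  assumes p: "p > 0" and c: "c > 0" and "q < c" "z \<le> 0"
  shows "hyp2F1 p q c z > 0"
proof (cases "\<bar>z\<bar> < 1")
  case True
  then show ?thesis
    using hyp2F1_series_pos[OF p c] assms by (simp add: hyp2F1_def)
next
  case False
  have "0 \<le> z / (z - 1)" "z / (z - 1) < 1"
    using \<open>z \<le> 0\<close> by (auto simp: divide_simps)
  then have "hyp2F1_series p (c - q) c (z / (z - 1)) \<ge> 1"
    using assms by (intro hyp2F1_series_ge_1) auto
  then show ?thesis
    using False \<open>z \<le> 0\<close> by (simp add: hyp2F1_def)
qed

lemma C_alpha_pos:
  assumes "mX > 0" "mY > 0" "OX > 0" "OY > 0" "\<alpha> > 0"
  shows "C_alpha mX mY OX OY \<alpha> > 0"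
proof -
  have "hyp2F1 mY (- 2 / \<alpha>) mX (- (mX * OY) / (mY * OX)) > 0"
  proof (rule hyp2F1_pos)
    have "- 2 / \<alpha> < 0" using assms by (simp add: divide_neg_pos)
    then show "- 2 / \<alpha> < mX" using assms by linarith
  qed (use assms in \<open>auto simp: divide_nonneg_pos\<close>)
  moreover have "Gamma mX > 0" "Gamma (mX + 2 / \<alpha>) > 0"
    using assms by (auto intro!: Gamma_real_pos add_pos_pos)
  ultimately show ?thesis by (simp add: C_alpha_def)
qed

section \<open>Integrals on the half-line\<close>

lemma set_integrable_lborel_iff_absolutely_integrable:
  fixes f :: "'a::euclidean_space \<Rightarrow> real"
  assumes "A \<in> sets borel" "f \<in> borel_measurable borel"
  shows "set_integrable lborel A f \<longleftrightarrow> f absolutely_integrable_on A"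
  using assms unfolding set_integrable_def by (simp add: integrable_completion)

lemma set_integral_Ioi_substitution_square:
  fixes k :: real and \<Phi> :: "real \<Rightarrow> real"
  assumes k: "k > 0" and [measurable]: "\<Phi> \<in> borel_measurable borel"
  shows "set_integrable lborel {0<..} (\<lambda>r. 2 * k * r * \<Phi> (k * r\<^sup>2))
         \<longleftrightarrow> set_integrable lborel {0<..} \<Phi>"
    and "(LINT r:{0<..}|lborel. 2 * k * r * \<Phi> (k * r\<^sup>2)) = (LINT x:{0<..}|lborel. \<Phi> x)"
proof -
  let ?g = "\<lambda>r::real. k * r\<^sup>2"
  let ?G = "\<lambda>r. \<bar>2 * k * r\<bar> * \<Phi> (?g r)"
  have image: "?g ` {0<..} = {0<..}"
  proof (intro equalityI subsetI)
    fix x :: real assume "x \<in> {0<..}"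
    then have "x = ?g (sqrt (x / k))" "sqrt (x / k) \<in> {0<..}" using k by auto
    then show "x \<in> ?g ` {0<..}" by blast
  qed (use k in auto)
  have inj: "inj_on ?g {0<..}"
    using k by (auto simp: inj_on_def power2_eq_iff_nonneg)
  have deriv: "(?g has_field_derivative 2 * k * r) (at r within {0<..})" for r
    by (auto intro!: derivative_eq_intros)
  have change: "?G absolutely_integrable_on {0<..} \<and> integral {0<..} ?G = I
      \<longleftrightarrow> \<Phi> absolutely_integrable_on {0<..} \<and> integral {0<..} \<Phi> = I" for I
    using has_absolute_integral_change_of_variables_1'[OF _ deriv inj, of \<Phi> I]
    unfolding image by simp
  have cong: "set_integrable lborel {0<..} (\<lambda>r. 2 * k * r * \<Phi> (?g r)) = set_integrable lborel {0<..} ?G"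
    "(LINT r:{0<..}|lborel. 2 * k * r * \<Phi> (?g r)) = (LINT r:{0<..}|lborel. ?G r)"
    by (rule set_integrable_cong, simp, simp, use k in simp)
       (rule set_lebesgue_integral_cong, simp, use k in simp)
  have "?G absolutely_integrable_on {0<..} \<longleftrightarrow> \<Phi> absolutely_integrable_on {0<..}"
    using change[of "integral {0<..} ?G"] change[of "integral {0<..} \<Phi>"] by blast
  then have iff: "set_integrable lborel {0<..} ?G \<longleftrightarrow> set_integrable lborel {0<..} \<Phi>"
    by (simp add: set_integrable_lborel_iff_absolutely_integrable)
  then show "set_integrable lborel {0<..} (\<lambda>r. 2 * k * r * \<Phi> (k * r\<^sup>2))
      \<longleftrightarrow> set_integrable lborel {0<..} \<Phi>"
    using cong(1) by simp
  show "(LINT r:{0<..}|lborel. 2 * k * r * \<Phi> (k * r\<^sup>2)) = (LINT x:{0<..}|lborel. \<Phi> x)"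
  proof (cases "set_integrable lborel {0<..} \<Phi>")
    case True
    with iff show ?thesis
      unfolding cong(2) using change[of "integral {0<..} \<Phi>"]
      by (simp add: set_borel_integral_eq_integral(2) set_integrable_lborel_iff_absolutely_integrable)
  next
    case False
    with iff have "(LINT r:{0<..}|lborel. ?G r) = 0" "(LINT x:{0<..}|lborel. \<Phi> x) = 0"
      unfolding set_integrable_def set_lebesgue_integral_def
      by (simp_all add: not_integrable_integral_eq)
    then show ?thesis using cong(2) by simp
  qed
qed

lemma integral_dominated_convergence_at:
  fixes s :: "real \<Rightarrow> 'a \<Rightarrow> real" and w f :: "'a \<Rightarrow> real"
  assumes "f \<in> borel_measurable M" "\<And>t. s t \<in> borel_measurable M" "integrable M w"
    and lim: "AE x in M. ((\<lambda>t. s t x) \<longlongrightarrow> f x) (at c)"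
    and bound: "eventually (\<lambda>t. AE x in M. norm (s t x) \<le> w x) (at c)"
  shows "((\<lambda>t. integral\<^sup>L M (s t)) \<longlongrightarrow> integral\<^sup>L M f) (at c)"
proof (subst tendsto_at_iff_sequentially, intro allI impI)
  fix X :: "nat \<Rightarrow> real" assume X: "\<forall>i. X i \<in> UNIV - {c}" "X \<longlonglongrightarrow> c"
  then have X_at: "filterlim X (at c) sequentially" by (intro filterlim_atI) auto
  from filterlim_iff[THEN iffD1, OF X_at, rule_format, OF bound]
  obtain N where w: "\<And>n. N \<le> n \<Longrightarrow> AE x in M. norm (s (X n) x) \<le> w x"
    by (auto simp: eventually_sequentially)
  show "((\<lambda>t. integral\<^sup>L M (s t)) \<circ> X) \<longlonglongrightarrow> integral\<^sup>L M f"
    unfolding comp_def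
  proof (rule LIMSEQ_offset[where k = N], rule integral_dominated_convergence)
    show "AE x in M. norm (s (X (n + N)) x) \<le> w x" for n
      by (rule w) auto
    show "AE x in M. (\<lambda>n. s (X (n + N)) x) \<longlonglongrightarrow> f x"
      using lim
    proof eventually_elim
      case (elim x)
      then show ?case
        by (intro LIMSEQ_ignore_initial_segment filterlim_compose[OF _ X_at])
    qed
  qed (use assms in auto)
qed

lemma abs_exp_minus_one_le: "\<bar>exp (u::real) - 1\<bar> \<le> \<bar>u\<bar> * exp \<bar>u\<bar>"
proof (cases "u \<ge> 0")
  case True
  have "1 - u \<le> exp (- u)" using exp_ge_add_one_self[of "- u"] by simp
  then have "exp u * (1 - u) \<le> 1" by (simp add: exp_minus field_simps)
  then show ?thesis using True by (simp add: algebra_simps)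
next
  case False
  then have "exp u \<le> 1" by simp
  moreover have "1 + u \<le> exp u" by (rule exp_ge_add_one_self)
  ultimately have "\<bar>exp u - 1\<bar> \<le> \<bar>u\<bar>" using False by arith
  also have "\<dots> \<le> \<bar>u\<bar> * exp \<bar>u\<bar>" by (simp add: mult_le_cancel_left1)
  finally show ?thesis .
qed

lemma abs_ln_le_powr:
  fixes x d :: real
  assumes "x > 0" "d > 0"
  shows "\<bar>ln x\<bar> \<le> (x powr d + x powr (- d)) / d"
proof -
  have "d * ln x \<le> x powr d" "- (d * ln x) \<le> x powr (- d)"
    using ln_le_minus_one[of "x powr d"] ln_le_minus_one[of "x powr (- d)"] assms
    by (simp_all add: ln_powr)
  moreover have "x powr d > 0" "x powr (- d) > 0" using assms by simp_all
  ultimately have "\<bar>d * ln x\<bar> \<le> x powr d + x powr (- d)" by arith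
  then have "d * \<bar>ln x\<bar> \<le> x powr d + x powr (- d)"
    using assms by (simp add: abs_mult)
  then show ?thesis using assms by (simp add: field_simps)
qed

lemma abs_powr_difference_quotient_le:
  fixes x d t :: real
  assumes x: "x > 0" and d: "d > 0" and t: "\<bar>t\<bar> \<le> d" "t \<noteq> 0"
  shows "\<bar>(x powr t - 1) / t\<bar> \<le> (x powr (2 * d) + 2 + x powr (- 2 * d)) / d"
proof -
  let ?S = "x powr d + x powr (- d)"
  have "\<bar>x powr t - 1\<bar> \<le> \<bar>t * ln x\<bar> * exp \<bar>t * ln x\<bar>"
    using abs_exp_minus_one_le[of "t * ln x"] x by (simp add: powr_def)
  then have "\<bar>(x powr t - 1) / t\<bar> \<le> \<bar>ln x\<bar> * exp \<bar>t * ln x\<bar>"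
    using t by (simp add: abs_mult divide_le_eq field_simps)
  also have "exp \<bar>t * ln x\<bar> \<le> ?S"
  proof -
    have "exp \<bar>t * ln x\<bar> \<le> exp (d * \<bar>ln x\<bar>)"
      using t by (simp add: abs_mult mult_right_mono)
    also have "\<dots> \<le> exp (d * ln x) + exp (- d * ln x)"
      by (cases "ln x \<ge> 0") (simp_all add: add_increasing add_increasing2)
    also have "\<dots> = ?S" using x by (simp add: powr_def mult.commute)
    finally show ?thesis .
  qed
  then have "\<bar>ln x\<bar> * exp \<bar>t * ln x\<bar> \<le> ?S / d * ?S"
    using abs_ln_le_powr[OF x d] by (intro mult_mono) auto
  also have "?S / d * ?S = (x powr (2 * d) + 2 + x powr (- 2 * d)) / d"
    using x by (simp add: field_simps power2_eq_square flip: powr_add)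
  finally show ?thesis by simp
qed

lemma powr_difference_quotient_tendsto:
  assumes "(x::real) > 0"
  shows "((\<lambda>t. (x powr t - 1) / t) \<longlongrightarrow> ln x) (at 0)"
proof -
  have "((\<lambda>t. exp (t * ln x)) has_field_derivative exp (0 * ln x) * ln x) (at 0)"
    by (auto intro!: derivative_eq_intros)
  then have "((\<lambda>t. (exp (t * ln x) - 1) / t) \<longlongrightarrow> ln x) (at 0)"
    by (simp add: has_field_derivative_iff)
  then show ?thesis
    using assms by (simp add: powr_def mult.commute)
qed

lemma set_integrable_mult_ln:
  fixes g :: "real \<Rightarrow> real"
  assumes [measurable]: "g \<in> borel_measurable borel" and nonneg: "\<And>x. x > 0 \<Longrightarrow> g x \<ge> 0"
    and d: "d > 0"
    and int: "set_integrable lborel {0<..} (\<lambda>x. g x * x powr d)"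
      "set_integrable lborel {0<..} (\<lambda>x. g x * x powr (- d))"
  shows "set_integrable lborel {0<..} (\<lambda>x. g x * ln x)"
proof (rule set_integrable_bound)
  show "set_integrable lborel {0<..} (\<lambda>x. (g x * x powr d + g x * x powr (- d)) / d)"
    using int by (intro set_integrable_divide set_integral_add)
  show "AE x in lborel. x \<in> {0<..} \<longrightarrow>
      norm (g x * ln x) \<le> norm ((g x * x powr d + g x * x powr (- d)) / d)"
  proof (intro AE_I2 impI)
    fix x :: real assume "x \<in> {0<..}"
    then have x: "x > 0" by simp
    have "norm (g x * ln x) = g x * \<bar>ln x\<bar>" using nonneg[OF x] by (simp add: abs_mult)
    also have "\<dots> \<le> g x * ((x powr d + x powr (- d)) / d)"
      by (intro mult_left_mono abs_ln_le_powr x d nonneg)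
    also have "\<dots> = norm ((g x * x powr d + g x * x powr (- d)) / d)"
      using nonneg[OF x] d by (simp add: field_simps)
    finally show "norm (g x * ln x) \<le> norm ((g x * x powr d + g x * x powr (- d)) / d)" .
  qed
qed (simp add: set_borel_measurable_def)

lemma tendsto_set_integral_powr_difference_quotient:
  fixes g :: "real \<Rightarrow> real"
  assumes [measurable]: "g \<in> borel_measurable borel" and nonneg: "\<And>x. x > 0 \<Longrightarrow> g x \<ge> 0"
    and d: "d > 0"
    and int: "\<And>h. \<bar>h\<bar> \<le> 2 * d \<Longrightarrow> set_integrable lborel {0<..} (\<lambda>x. g x * x powr h)"
  shows "((\<lambda>t. LINT x:{0<..}|lborel. g x * ((x powr t - 1) / t))
          \<longlongrightarrow> (LINT x:{0<..}|lborel. g x * ln x)) (at 0)"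
proof -
  define s where "s t x = indicator {0<..} x *\<^sub>R (g x * ((x powr t - 1) / t))" for t x
  define W where "W x = (g x * x powr (2 * d) + 2 * (g x * x powr 0) + g x * x powr (- 2 * d)) / d"
    for x
  have "set_integrable lborel {0<..} W"
    unfolding W_def using int[of "2 * d"] int[of 0] int[of "- 2 * d"] d
    by (intro set_integrable_divide set_integral_add(1) set_integrable_mult_right) auto
  then have W_int: "integrable lborel (\<lambda>x. indicator {0<..} x * W x)"
    by (simp add: set_integrable_def)
  have lim: "AE x in lborel. ((\<lambda>t. s t x) \<longlongrightarrow> indicator {0<..} x *\<^sub>R (g x * ln x)) (at 0)"
  proof (intro AE_I2)
    fix x :: real
    show "((\<lambda>t. s t x) \<longlongrightarrow> indicator {0<..} x *\<^sub>R (g x * ln x)) (at 0)"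
    proof (cases "x > 0")
      case True
      have "((\<lambda>t. g x * ((x powr t - 1) / t)) \<longlongrightarrow> g x * ln x) (at 0)"
        by (intro tendsto_mult_left powr_difference_quotient_tendsto True)
      then show ?thesis using True by (simp add: s_def)
    qed (simp add: s_def)
  qed
  have "AE x in lborel. norm (s t x) \<le> indicator {0<..} x * W x" if "t \<noteq> 0" "\<bar>t\<bar> < d" for t
  proof (intro AE_I2)
    fix x :: real
    show "norm (s t x) \<le> indicator {0<..} x * W x"
    proof (cases "x > 0")
      case True
      have "norm (s t x) = g x * \<bar>(x powr t - 1) / t\<bar>"
        using True nonneg[OF True] by (simp add: s_def abs_mult)
      also have "\<dots> \<le> g x * ((x powr (2 * d) + 2 + x powr (- 2 * d)) / d)"
        using that by (intro mult_left_mono abs_powr_difference_quotient_le True d nonneg) auto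
      also have "\<dots> = indicator {0<..} x * W x"
        using True d by (simp add: W_def field_simps)
      finally show ?thesis .
    qed (simp add: s_def)
  qed
  then have bound: "\<forall>\<^sub>F t in at 0. AE x in lborel. norm (s t x) \<le> indicator {0<..} x * W x"
    unfolding eventually_at using d by (auto simp: dist_real_def)
  show ?thesis
    unfolding set_lebesgue_integral_def s_def [symmetric]
    by (rule integral_dominated_convergence_at[OF _ _ W_int lim bound]) (simp_all add: s_def)
qed

lemma has_field_derivative_set_integral_powr:
  fixes g :: "real \<Rightarrow> real"
  assumes [measurable]: "g \<in> borel_measurable borel" and nonneg: "\<And>x. x > 0 \<Longrightarrow> g x \<ge> 0"
    and d: "d > 0"
    and int: "\<And>h. \<bar>h\<bar> \<le> 2 * d \<Longrightarrow> set_integrable lborel {0<..} (\<lambda>x. g x * x powr h)"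
  shows "((\<lambda>h. LINT x:{0<..}|lborel. g x * x powr h)
          has_field_derivative (LINT x:{0<..}|lborel. g x * ln x)) (at 0)"
proof -
  let ?M = "\<lambda>h. LINT x:{0<..}|lborel. g x * x powr h"
  have "(LINT x:{0<..}|lborel. g x * ((x powr t - 1) / t)) = (?M t - ?M 0) / (t - 0)"
    if "t \<noteq> 0" "\<bar>t\<bar> < d" for t
  proof -
    have "(?M t - ?M 0) / t = (LINT x:{0<..}|lborel. (g x * x powr t - g x * x powr 0) / t)"
      using int[of t] int[of 0] that d by (simp add: set_integral_diff)
    also have "\<dots> = (LINT x:{0<..}|lborel. g x * ((x powr t - 1) / t))"
      by (rule set_lebesgue_integral_cong) (auto simp: field_simps)
    finally show ?thesis by (simp only: diff_zero)
  qed
  then have "\<forall>\<^sub>F t in at 0. (LINT x:{0<..}|lborel. g x * ((x powr t - 1) / t)) = (?M t - ?M 0) / (t - 0)"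
    unfolding eventually_at using d by (auto simp: dist_real_def)
  from tendsto_cong[THEN iffD1, OF this tendsto_set_integral_powr_difference_quotient[OF assms]]
  show ?thesis unfolding has_field_derivative_iff .
qed

section \<open>The normalized power of the Beaulieu-Xie envelope\<close>

(* The density of (mX/OX) R^2 for a = mX, b = mY, beta = BX_beta (BX_pdf_eq_BX_power_pdf). *)
definition BX_power_pdf :: "real \<Rightarrow> real \<Rightarrow> real \<Rightarrow> real \<Rightarrow> real" where
  "BX_power_pdf a b \<beta> x = (1 - \<beta>) powr b / Gamma a * (x powr (a - 1) * exp (- x) * hyp1F1 b a (\<beta> * x))"

lemma BX_power_pdf_measurable [measurable]: "BX_power_pdf a b \<beta> \<in> borel_measurable borel"
  unfolding BX_power_pdf_def hyp1F1_def by measurable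

lemma BX_power_pdf_nonneg:
  assumes "a > 0" "b > 0" "0 \<le> \<beta>" "\<beta> < 1" "x > 0"
  shows "BX_power_pdf a b \<beta> x \<ge> 0"
  using hyp1F1_ge_1[of b a "\<beta> * x"] Gamma_real_pos[of a] assms
  by (simp add: BX_power_pdf_def)

lemma set_integral_BX_power_pdf_powr:
  assumes a: "a > 0" and h: "a + h > 0" and \<beta>: "\<bar>\<beta>\<bar> < 1"
  shows "set_integrable lborel {0<..} (\<lambda>x. BX_power_pdf a b \<beta> x * x powr h)"
    and "(LINT x:{0<..}|lborel. BX_power_pdf a b \<beta> x * x powr h)
         = (1 - \<beta>) powr b * Gamma (a + h) / Gamma a * hyp2F1_series (a + h) b a \<beta>"
proof -
  let ?K = "(1 - \<beta>) powr b / Gamma a"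
  let ?F = "\<lambda>x. x powr (a + h - 1) * exp (- x) * hyp1F1 b a (\<beta> * x)"
  have eq: "BX_power_pdf a b \<beta> x * x powr h = ?K * ?F x" if "x \<in> {0<..}" for x
  proof -
    have "x powr (a - 1) * x powr h = x powr (a + h - 1)"
      by (simp add: powr_add [symmetric] algebra_simps)
    then show ?thesis by (simp add: BX_power_pdf_def mult_ac)
  qed
  have int: "set_integrable lborel {0<..} ?F" "(LINT x:{0<..}|lborel. ?F x) = Gamma (a + h) * hyp2F1_series (a + h) b a \<beta>"
    using set_integral_Gamma_hyp1F1[OF h a \<beta>, of b] by (simp_all add: mult.commute[of \<beta>])
  show "set_integrable lborel {0<..} (\<lambda>x. BX_power_pdf a b \<beta> x * x powr h)"
    using set_integrable_mult_right[OF int(1), of ?K]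
    by (rule set_integrable_cong[THEN iffD2, rotated 3]) (simp_all add: eq)
  have "(LINT x:{0<..}|lborel. BX_power_pdf a b \<beta> x * x powr h) = (LINT x:{0<..}|lborel. ?K * ?F x)"
    by (rule set_lebesgue_integral_cong) (simp_all add: eq)
  then show "(LINT x:{0<..}|lborel. BX_power_pdf a b \<beta> x * x powr h)
      = (1 - \<beta>) powr b * Gamma (a + h) / Gamma a * hyp2F1_series (a + h) b a \<beta>"
    using int(2) by simp
qed

lemma set_integral_BX_power_pdf:
  assumes "a > 0" "\<bar>\<beta>\<bar> < 1"
  shows "set_integrable lborel {0<..} (BX_power_pdf a b \<beta>)"
    and "(LINT x:{0<..}|lborel. BX_power_pdf a b \<beta> x) = 1"
proof -
  have cong: "set_integrable lborel {0<..} (BX_power_pdf a b \<beta>)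
      = set_integrable lborel {0<..} (\<lambda>x. BX_power_pdf a b \<beta> x * x powr 0)"
    "(LINT x:{0<..}|lborel. BX_power_pdf a b \<beta> x)
      = (LINT x:{0<..}|lborel. BX_power_pdf a b \<beta> x * x powr 0)"
    by (rule set_integrable_cong; simp) (rule set_lebesgue_integral_cong; simp)
  show "set_integrable lborel {0<..} (BX_power_pdf a b \<beta>)"
    unfolding cong using set_integral_BX_power_pdf_powr(1)[of a 0] assms by simp
  have "1 - \<beta> > 0" using assms by simp
  then show "(LINT x:{0<..}|lborel. BX_power_pdf a b \<beta> x) = 1"
    unfolding cong using set_integral_BX_power_pdf_powr(2)[of a 0] assms Gamma_real_pos[OF assms(1)]
    by (simp add: hyp2F1_series_diagonal powr_minus)
qed

lemma set_integrable_BX_power_pdf_ln: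
  assumes "a > 0" "b > 0" "0 \<le> \<beta>" "\<beta> < 1"
  shows "set_integrable lborel {0<..} (\<lambda>x. BX_power_pdf a b \<beta> x * ln x)"
  using assms
  by (intro set_integrable_mult_ln[of _ "a / 2"] BX_power_pdf_measurable BX_power_pdf_nonneg
        set_integral_BX_power_pdf_powr(1)) auto

(* By set_integral_BX_power_pdf_powr, (1-beta)^b Gamma(t)/Gamma(a) 2F1(t, b; a; beta) is the
   Mellin moment of order t - a of BX_power_pdf; differentiate this identity at t = a. *)
lemma hyp2F1_da_diagonal:
  assumes a: "a > 0" and b: "b > 0" and \<beta>: "0 \<le> \<beta>" "\<beta> < 1"
  shows "(1 - \<beta>) powr b * hyp2F1_da a b a \<beta>
         = (LINT x:{0<..}|lborel. BX_power_pdf a b \<beta> x * ln x) - Digamma a"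
proof -
  define M where "M h = (LINT x:{0<..}|lborel. BX_power_pdf a b \<beta> x * x powr h)" for h
  define D where "D = (LINT x:{0<..}|lborel. BX_power_pdf a b \<beta> x * ln x)"
  define K where "K = (1 - \<beta>) powr b"
  have K: "K > 0" using \<beta> by (simp add: K_def)
  have Ga: "Gamma a > 0" using Gamma_real_pos[OF a] .
  have \<beta>_abs: "\<bar>\<beta>\<bar> < 1" using \<beta> by simp
  have "(M has_field_derivative D) (at (a + - a))"
    unfolding M_def D_def using a b \<beta>
    by (simp, intro has_field_derivative_set_integral_powr[of _ "a / 4"] BX_power_pdf_nonneg
          set_integral_BX_power_pdf_powr(1)) auto
  then have "((\<lambda>t. M (t + - a)) has_field_derivative D) (at a)"
    by (rule DERIV_shift[THEN iffD1])
  then have "((\<lambda>t. M (t - a)) has_field_derivative D) (at a)" by simp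
  then have quotient: "((\<lambda>t. M (t - a) * (Gamma a / K) / Gamma t) has_field_derivative
      (D * (Gamma a / K) * Gamma a - M (a - a) * (Gamma a / K) * (Gamma a * Digamma a))
        / (Gamma a * Gamma a)) (at a)"
    using a Ga
    by (intro DERIV_divide DERIV_cmult_right has_field_derivative_Gamma)
       (auto simp: less_imp_neq[symmetric] elim!: nonpos_Ints_cases)
  have "M 0 = 1"
    using set_integral_BX_power_pdf_powr(2)[OF a _ \<beta>_abs, of 0] a Ga \<beta>
    by (simp add: M_def hyp2F1_series_diagonal[OF a \<beta>_abs] powr_minus)
  then have derivative_value: "(D * (Gamma a / K) * Gamma a - M (a - a) * (Gamma a / K) * (Gamma a * Digamma a))
        / (Gamma a * Gamma a) = (D - Digamma a) / K"
    using Ga K by (simp add: field_simps)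
  have "\<forall>\<^sub>F t in nhds a. t \<in> {0<..}"
    by (rule eventually_nhds_in_open) (use a in auto)
  then have "\<forall>\<^sub>F t in nhds a. hyp2F1 t b a \<beta> = M (t - a) * (Gamma a / K) / Gamma t"
  proof eventually_elim
    case (elim t)
    then have Gt: "Gamma t > 0" by (simp add: Gamma_real_pos)
    from elim have "M (t - a) = K * Gamma t / Gamma a * hyp2F1_series t b a \<beta>"
      using set_integral_BX_power_pdf_powr(2)[OF a _ \<beta>_abs, of "t - a"] by (simp add: M_def K_def)
    then show ?case
      using Ga K Gt \<beta>_abs by (simp add: hyp2F1_def field_simps)
  qed
  then have "((\<lambda>t. hyp2F1 t b a \<beta>) has_field_derivative (D - Digamma a) / K) (at a)"
    using quotient unfolding derivative_value by (subst DERIV_cong_ev[OF refl _ refl])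
  then have "hyp2F1_da a b a \<beta> = (D - Digamma a) / K"
    unfolding hyp2F1_da_def by (rule DERIV_imp_deriv)
  then show ?thesis using K by (simp add: D_def K_def)
qed

section \<open>High-SNR behaviour of the ergodic capacity\<close>

lemma BX_beta_bounds:
  assumes "mX > 0" "mY > 0" "OX > 0" "OY > 0"
  shows "0 < BX_beta mX mY OX OY" "BX_beta mX mY OX OY < 1"
    and "1 - BX_beta mX mY OX OY = mY * OX / (mY * OX + mX * OY)"
proof -
  have "mY * OX > 0" "mX * OY > 0" using assms by simp_all
  then show "0 < BX_beta mX mY OX OY" "BX_beta mX mY OX OY < 1"
    "1 - BX_beta mX mY OX OY = mY * OX / (mY * OX + mX * OY)"
    by (simp_all add: BX_beta_def field_simps)
qed

lemma BX_pdf_eq_BX_power_pdf: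
  assumes mX: "mX > 0" and mY: "mY > 0" and OX: "OX > 0" and OY: "OY > 0" and r: "r > 0"
  shows "BX_pdf mX mY OX OY r
         = 2 * (mX / OX) * r * BX_power_pdf mX mY (BX_beta mX mY OX OY) (mX / OX * r\<^sup>2)"
proof -
  define k where "k = mX / OX"
  define \<beta> where "\<beta> = BX_beta mX mY OX OY"
  have k: "k > 0" using mX OX by (simp add: k_def)
  have "2 * k * r * (k * r\<^sup>2) powr (mX - 1)
      = 2 * (k * k powr (mX - 1)) * (r * (r\<^sup>2) powr (mX - 1))"
    using k by (simp add: powr_mult)
  also have "k * k powr (mX - 1) = k powr mX"
    using k by (simp add: powr_mult_base)
  also have "r * (r\<^sup>2) powr (mX - 1) = r powr (2 * mX - 1)"
  proof -
    have "r\<^sup>2 = r powr 2" using r by simp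
    then have "(r\<^sup>2) powr (mX - 1) = r powr (2 * (mX - 1))" by (simp only: powr_powr)
    then show ?thesis using r by (simp add: powr_mult_base algebra_simps)
  qed
  finally have power: "2 * k * r * (k * r\<^sup>2) powr (mX - 1) = 2 * k powr mX * r powr (2 * mX - 1)" .
  have argument: "\<beta> * (k * r\<^sup>2) = mX\<^sup>2 * OY * r\<^sup>2 / (OX * (mY * OX + mX * OY))"
    using mX OX by (simp add: \<beta>_def k_def BX_beta_def power2_eq_square field_simps)
  have weight: "1 - \<beta> = mY * OX / (mY * OX + mX * OY)"
    unfolding \<beta>_def by (rule BX_beta_bounds(3)[OF mX mY OX OY])
  have "2 * k * r * BX_power_pdf mX mY \<beta> (k * r\<^sup>2)
      = (2 * k * r * (k * r\<^sup>2) powr (mX - 1)) * (1 - \<beta>) powr mY / Gamma mX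
        * hyp1F1 mY mX (\<beta> * (k * r\<^sup>2)) * exp (- (k * r\<^sup>2))"
    by (simp add: BX_power_pdf_def algebra_simps)
  also have "\<dots> = BX_pdf mX mY OX OY r"
    unfolding power argument weight by (simp add: BX_pdf_def k_def algebra_simps)
  finally show ?thesis by (simp add: k_def \<beta>_def)
qed

lemma set_integral_BX_pdf_transfer:
  assumes mX: "mX > 0" and mY: "mY > 0" and OX: "OX > 0" and OY: "OY > 0"
    and [measurable]: "H \<in> borel_measurable borel"
  defines "g \<equiv> BX_power_pdf mX mY (BX_beta mX mY OX OY)"
  shows "set_integrable lborel {0<..} (\<lambda>r. BX_pdf mX mY OX OY r * H (mX / OX * r\<^sup>2))
         \<longleftrightarrow> set_integrable lborel {0<..} (\<lambda>x. g x * H x)"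
    and "(LINT r:{0<..}|lborel. BX_pdf mX mY OX OY r * H (mX / OX * r\<^sup>2))
         = (LINT x:{0<..}|lborel. g x * H x)"
proof -
  have k: "mX / OX > 0" using mX OX by simp
  have pdf_eq: "BX_pdf mX mY OX OY r * H (mX / OX * r\<^sup>2)
      = 2 * (mX / OX) * r * (g (mX / OX * r\<^sup>2) * H (mX / OX * r\<^sup>2))" if "r \<in> {0<..}" for r
    using BX_pdf_eq_BX_power_pdf[OF mX mY OX OY, of r] that by (simp add: g_def)
  have "set_integrable lborel {0<..} (\<lambda>r. BX_pdf mX mY OX OY r * H (mX / OX * r\<^sup>2))
      = set_integrable lborel {0<..} (\<lambda>r. 2 * (mX / OX) * r * (g (mX / OX * r\<^sup>2) * H (mX / OX * r\<^sup>2)))"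
    "(LINT r:{0<..}|lborel. BX_pdf mX mY OX OY r * H (mX / OX * r\<^sup>2))
      = (LINT r:{0<..}|lborel. 2 * (mX / OX) * r * (g (mX / OX * r\<^sup>2) * H (mX / OX * r\<^sup>2)))"
    by (rule set_integrable_cong, simp, simp, erule pdf_eq)
       (rule set_lebesgue_integral_cong, simp, blast intro: pdf_eq)
  then show "set_integrable lborel {0<..} (\<lambda>r. BX_pdf mX mY OX OY r * H (mX / OX * r\<^sup>2))
      \<longleftrightarrow> set_integrable lborel {0<..} (\<lambda>x. g x * H x)"
    "(LINT r:{0<..}|lborel. BX_pdf mX mY OX OY r * H (mX / OX * r\<^sup>2))
      = (LINT x:{0<..}|lborel. g x * H x)"
    using set_integral_Ioi_substitution_square[OF k, of "\<lambda>x. g x * H x"] by (simp_all add: g_def)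
qed

lemma set_integral_log_scaled_powr:
  fixes g :: "real \<Rightarrow> real"
  assumes int: "set_integrable lborel {0<..} g" "set_integrable lborel {0<..} (\<lambda>x. g x * ln x)"
    and \<kappa>: "\<kappa> > 0"
  shows "set_integrable lborel {0<..} (\<lambda>x. g x * log 2 (\<kappa> * x powr \<theta>))"
    and "(LINT x:{0<..}|lborel. g x * log 2 (\<kappa> * x powr \<theta>))
         = (ln \<kappa> * (LINT x:{0<..}|lborel. g x) + \<theta> * (LINT x:{0<..}|lborel. g x * ln x)) / ln 2"
proof -
  let ?L = "\<lambda>x. ln \<kappa> / ln 2 * g x + \<theta> / ln 2 * (g x * ln x)"
  have eq: "g x * log 2 (\<kappa> * x powr \<theta>) = ?L x" if "x \<in> {0<..}" for x
    using that \<kappa> by (simp add: log_def ln_mult ln_powr field_simps)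
  have L: "set_integrable lborel {0<..} ?L"
    using int by (intro set_integral_add(1) set_integrable_mult_right)
  show "set_integrable lborel {0<..} (\<lambda>x. g x * log 2 (\<kappa> * x powr \<theta>))"
    using L by (rule set_integrable_cong[THEN iffD2, rotated 3]) (simp_all add: eq)
  have "(LINT x:{0<..}|lborel. g x * log 2 (\<kappa> * x powr \<theta>)) = (LINT x:{0<..}|lborel. ?L x)"
    by (rule set_lebesgue_integral_cong) (simp_all add: eq)
  also have "\<dots> = (ln \<kappa> * (LINT x:{0<..}|lborel. g x) + \<theta> * (LINT x:{0<..}|lborel. g x * ln x)) / ln 2"
    using int by (simp add: set_integral_add(2) add_divide_distrib)
  finally show "(LINT x:{0<..}|lborel. g x * log 2 (\<kappa> * x powr \<theta>))
      = (ln \<kappa> * (LINT x:{0<..}|lborel. g x) + \<theta> * (LINT x:{0<..}|lborel. g x * ln x)) / ln 2" .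
qed

lemma ln_one_plus_inverse_le:
  fixes t :: real
  assumes "t > 0"
  shows "ln (1 + inverse t) \<le> ln 2 + \<bar>ln t\<bar>"
proof (cases "t \<ge> 1")
  case True
  then have "inverse t \<le> 1" by (simp add: inverse_le_1_iff)
  then have "ln (1 + inverse t) \<le> ln 2" using assms by (intro ln_mono) (simp_all add: add_pos_pos)
  then show ?thesis by simp
next
  case False
  then have "ln (1 + inverse t) \<le> ln (2 * inverse t)" using assms by (simp add: field_simps)
  also have "\<dots> = ln 2 - ln t" using assms by (simp add: ln_mult ln_inverse)
  finally show ?thesis by simp
qed

lemma log_one_plus_inverse_powr_bounds:
  fixes \<kappa> x \<theta> :: real
  assumes "\<kappa> \<ge> 1" "x > 0"
  shows "0 \<le> log 2 (1 + inverse (\<kappa> * x powr \<theta>))"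
    and "log 2 (1 + inverse (\<kappa> * x powr \<theta>)) \<le> 1 + \<bar>\<theta>\<bar> * \<bar>ln x\<bar> / ln 2"
proof -
  define P where "P = x powr \<theta>"
  have P: "P > 0" using assms by (simp add: P_def)
  have "1 \<le> 1 + inverse (\<kappa> * P)" using assms P by simp
  then show "0 \<le> log 2 (1 + inverse (\<kappa> * x powr \<theta>))"
    unfolding log_def P_def by (intro divide_nonneg_pos ln_ge_zero) auto
  have "ln (1 + inverse (\<kappa> * P)) \<le> ln (1 + inverse P)"
    using assms P by (intro ln_mono) (auto simp: add_pos_pos field_simps)
  also have "\<dots> \<le> ln 2 + \<bar>\<theta>\<bar> * \<bar>ln x\<bar>"
    using ln_one_plus_inverse_le[OF P] assms by (simp add: P_def ln_powr abs_mult)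
  finally have "log 2 (1 + inverse (\<kappa> * P)) \<le> (ln 2 + \<bar>\<theta>\<bar> * \<bar>ln x\<bar>) / ln 2"
    unfolding log_def by (rule divide_right_mono) simp
  then show "log 2 (1 + inverse (\<kappa> * x powr \<theta>)) \<le> 1 + \<bar>\<theta>\<bar> * \<bar>ln x\<bar> / ln 2"
    by (simp add: P_def add_divide_distrib)
qed

lemma log_one_plus_eq:
  fixes y :: real
  assumes "y > 0"
  shows "log b (1 + y) = log b y + log b (1 + inverse y)"
proof -
  have "1 + y = y * (1 + inverse y)" using assms by (simp add: field_simps)
  also have "ln (y * (1 + inverse y)) = ln y + ln (1 + inverse y)"
    using assms by (intro ln_mult_pos) (simp_all add: add_pos_pos)
  finally show ?thesis by (simp add: log_def add_divide_distrib)
qed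

lemma set_integral_log_one_plus_minus_log:
  fixes g :: "real \<Rightarrow> real"
  assumes int: "set_integrable lborel {0<..} g" "set_integrable lborel {0<..} (\<lambda>x. g x * ln x)"
    and \<kappa>: "\<kappa> > 0"
    and int_gap: "set_integrable lborel {0<..} (\<lambda>x. g x * log 2 (1 + inverse (\<kappa> * x powr \<theta>)))"
  shows "(LINT x:{0<..}|lborel. g x * log 2 (1 + \<kappa> * x powr \<theta>))
           - (LINT x:{0<..}|lborel. g x * log 2 (\<kappa> * x powr \<theta>))
         = (LINT x:{0<..}|lborel. g x * log 2 (1 + inverse (\<kappa> * x powr \<theta>)))"
proof -
  have "g x * log 2 (1 + \<kappa> * x powr \<theta>)
      = g x * log 2 (\<kappa> * x powr \<theta>) + g x * log 2 (1 + inverse (\<kappa> * x powr \<theta>))"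
    if "x \<in> {0<..}" for x
    using log_one_plus_eq[of "\<kappa> * x powr \<theta>" 2] that \<kappa> by (simp add: distrib_left)
  then have "(LINT x:{0<..}|lborel. g x * log 2 (1 + \<kappa> * x powr \<theta>))
      = (LINT x:{0<..}|lborel. g x * log 2 (\<kappa> * x powr \<theta>)
          + g x * log 2 (1 + inverse (\<kappa> * x powr \<theta>)))"
    by (intro set_lebesgue_integral_cong) auto
  also have "\<dots> = (LINT x:{0<..}|lborel. g x * log 2 (\<kappa> * x powr \<theta>))
      + (LINT x:{0<..}|lborel. g x * log 2 (1 + inverse (\<kappa> * x powr \<theta>)))"
    using set_integral_log_scaled_powr(1)[OF int \<kappa>, of \<theta>] int_gap
    by (simp add: set_integral_add(2))
  finally show ?thesis by simp
qed

lemma tendsto_set_integral_log_one_plus_minus_log: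
  fixes g :: "real \<Rightarrow> real"
  assumes [measurable]: "g \<in> borel_measurable borel" and nonneg: "\<And>x. x > 0 \<Longrightarrow> g x \<ge> 0"
    and int: "set_integrable lborel {0<..} g" "set_integrable lborel {0<..} (\<lambda>x. g x * ln x)"
  shows "((\<lambda>\<kappa>. (LINT x:{0<..}|lborel. g x * log 2 (1 + \<kappa> * x powr \<theta>))
                - (LINT x:{0<..}|lborel. g x * log 2 (\<kappa> * x powr \<theta>))) \<longlongrightarrow> 0) at_top"
proof -
  define Q where "Q \<kappa> x = g x * log 2 (1 + inverse (\<kappa> * x powr \<theta>))" for \<kappa> x
  define W where "W x = g x + \<bar>\<theta>\<bar> / ln 2 * \<bar>g x * ln x\<bar>" for x
  have [measurable]: "Q \<kappa> \<in> borel_measurable borel" for \<kappa>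
    unfolding Q_def by measurable
  have W_int: "set_integrable lborel {0<..} W"
    unfolding W_def using int by (intro set_integral_add(1) set_integrable_mult_right set_integrable_abs)
  have Q_bound: "0 \<le> Q \<kappa> x \<and> Q \<kappa> x \<le> W x" if "\<kappa> \<ge> 1" "x > 0" for \<kappa> x
  proof -
    have "W x = g x * (1 + \<bar>\<theta>\<bar> * \<bar>ln x\<bar> / ln 2)"
      using nonneg[OF \<open>x > 0\<close>] by (simp add: W_def abs_mult field_simps)
    then show ?thesis
      using log_one_plus_inverse_powr_bounds[OF that, of \<theta>] nonneg[OF \<open>x > 0\<close>]
      by (simp add: Q_def mult_left_mono)
  qed
  have Q_int: "set_integrable lborel {0<..} (Q \<kappa>)" if "\<kappa> \<ge> 1" for \<kappa>
  proof (rule set_integrable_bound[OF W_int])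
    show "AE x in lborel. x \<in> {0<..} \<longrightarrow> norm (Q \<kappa> x) \<le> norm (W x)"
      using Q_bound[OF that] by (intro AE_I2) force
  qed (simp add: set_borel_measurable_def)
  have W_int': "integrable lborel (\<lambda>x. indicator {0<..} x *\<^sub>R W x)"
    using W_int by (simp add: set_integrable_def)
  have pointwise: "AE x in lborel. ((\<lambda>\<kappa>. indicator {0<..} x *\<^sub>R Q \<kappa> x) \<longlongrightarrow> 0) at_top"
  proof (rule AE_I2)
    fix x :: real
    show "((\<lambda>\<kappa>. indicator {0<..} x *\<^sub>R Q \<kappa> x) \<longlongrightarrow> 0) at_top"
    proof (cases "x > 0")
      case True
      then have "((\<lambda>\<kappa>. inverse (\<kappa> * x powr \<theta>)) \<longlongrightarrow> 0) at_top" by real_asymp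
      then have "((\<lambda>\<kappa>. g x * log 2 (1 + inverse (\<kappa> * x powr \<theta>))) \<longlongrightarrow> g x * log 2 (1 + 0)) at_top"
        by (intro tendsto_intros) auto
      then show ?thesis using True by (simp add: Q_def)
    qed simp
  qed
  have dominated: "\<forall>\<^sub>F \<kappa> in at_top. AE x in lborel.
      norm (indicator {0<..} x *\<^sub>R Q \<kappa> x) \<le> indicator {0<..} x *\<^sub>R W x"
    using eventually_ge_at_top[of "1::real"]
    by eventually_elim (use Q_bound in \<open>auto split: split_indicator\<close>)
  have "((\<lambda>\<kappa>. LINT x:{0<..}|lborel. Q \<kappa> x) \<longlongrightarrow> 0) at_top"
    using integral_dominated_convergence_at_top[OF _ _ W_int' pointwise dominated]
    by (simp add: set_lebesgue_integral_def)
  moreover have "\<forall>\<^sub>F \<kappa> in at_top. (LINT x:{0<..}|lborel. Q \<kappa> x)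
      = (LINT x:{0<..}|lborel. g x * log 2 (1 + \<kappa> * x powr \<theta>))
        - (LINT x:{0<..}|lborel. g x * log 2 (\<kappa> * x powr \<theta>))"
    using eventually_ge_at_top[of "1::real"]
  proof eventually_elim
    case (elim \<kappa>)
    then have "set_integrable lborel {0<..} (\<lambda>x. g x * log 2 (1 + inverse (\<kappa> * x powr \<theta>)))"
      using Q_int[OF elim] by (simp add: Q_def [abs_def])
    from set_integral_log_one_plus_minus_log[OF int _ this] elim show ?case
      by (simp add: Q_def)
  qed
  ultimately show ?thesis by (simp add: tendsto_cong)
qed

lemma aBX_snr_eq_powr:
  assumes "mX > 0" "mY > 0" "OX > 0" "OY > 0" "\<alpha> > 0"
  shows "aBX_snr mX mY OX OY \<alpha> \<gamma> r
         = \<gamma> * C_alpha mX mY OX OY \<alpha> powr (2 / \<alpha>) * (mX / OX * r\<^sup>2) powr (2 / \<alpha>)"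
proof -
  have "(C_alpha mX mY OX OY \<alpha> * (mX / OX * r\<^sup>2)) powr (2 / \<alpha>)
      = C_alpha mX mY OX OY \<alpha> powr (2 / \<alpha>) * (mX / OX * r\<^sup>2) powr (2 / \<alpha>)"
    using C_alpha_pos[OF assms] assms by (intro powr_mult)
  then show ?thesis by (simp add: aBX_snr_def mult_ac)
qed

lemma asym_A_eq_log_moment:
  assumes mX: "mX > 0" and mY: "mY > 0" and OX: "OX > 0" and OY: "OY > 0" and \<alpha>: "\<alpha> > 0"
    and \<gamma>: "\<gamma> > 0"
  shows "asym_A mX mY OX OY \<alpha> \<gamma>
         = (ln (\<gamma> * C_alpha mX mY OX OY \<alpha> powr (2 / \<alpha>))
            + 2 / \<alpha> * (LINT x:{0<..}|lborel. BX_power_pdf mX mY (BX_beta mX mY OX OY) x * ln x)) / ln 2"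
proof -
  let ?C = "C_alpha mX mY OX OY \<alpha>"
  have C: "?C > 0" by (rule C_alpha_pos[OF mX mY OX OY \<alpha>])
  have "ln (?C * \<gamma> powr (\<alpha> / 2)) = ln ?C + \<alpha> / 2 * ln \<gamma>"
    using C \<gamma> by (simp add: ln_mult ln_powr)
  moreover have "ln (\<gamma> * ?C powr (2 / \<alpha>)) = ln \<gamma> + 2 / \<alpha> * ln ?C"
    using C \<gamma> by (simp add: ln_mult ln_powr)
  moreover have "0 \<le> BX_beta mX mY OX OY" "BX_beta mX mY OX OY < 1"
    using BX_beta_bounds[OF mX mY OX OY] by simp_all
  note hyp2F1_da_diagonal[OF mX mY this]
  ultimately show ?thesis
    using \<alpha> by (simp add: asym_A_def field_simps)
qed

lemma set_integral_BX_pdf_log_snr: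
  assumes "mX > 0" "mY > 0" "OX > 0" "OY > 0" "\<alpha> > 0" "\<gamma> > 0"
  shows "set_integrable lborel {0<..}
           (\<lambda>r. BX_pdf mX mY OX OY r * log 2 (aBX_snr mX mY OX OY \<alpha> \<gamma> r))"
    and "(LINT r:{0<..}|lborel. BX_pdf mX mY OX OY r * log 2 (aBX_snr mX mY OX OY \<alpha> \<gamma> r))
         = asym_A mX mY OX OY \<alpha> \<gamma>"
proof -
  define \<beta> where "\<beta> = BX_beta mX mY OX OY"
  define \<kappa> where "\<kappa> = \<gamma> * C_alpha mX mY OX OY \<alpha> powr (2 / \<alpha>)"
  have \<beta>: "0 \<le> \<beta>" "\<beta> < 1" using BX_beta_bounds[OF assms(1-4)] by (simp_all add: \<beta>_def)
  have \<kappa>: "\<kappa> > 0" using assms C_alpha_pos[OF assms(1-5)] by (simp add: \<kappa>_def)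
  note log_moment = set_integral_log_scaled_powr[OF set_integral_BX_power_pdf(1)
      set_integrable_BX_power_pdf_ln \<kappa>, of mX \<beta> mY "2 / \<alpha>"]
  note transfer = set_integral_BX_pdf_transfer[OF assms(1-4), of "\<lambda>x. log 2 (\<kappa> * x powr (2 / \<alpha>))"]
  show "set_integrable lborel {0<..}
      (\<lambda>r. BX_pdf mX mY OX OY r * log 2 (aBX_snr mX mY OX OY \<alpha> \<gamma> r))"
    using transfer(1) log_moment(1) assms \<beta>
    by (simp add: aBX_snr_eq_powr[OF assms(1-5)] \<kappa>_def \<beta>_def)
  show "(LINT r:{0<..}|lborel. BX_pdf mX mY OX OY r * log 2 (aBX_snr mX mY OX OY \<alpha> \<gamma> r))
      = asym_A mX mY OX OY \<alpha> \<gamma>"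
    using transfer(2) log_moment(2) assms \<beta> set_integral_BX_power_pdf(2)[of mX \<beta> mY]
    by (simp add: aBX_snr_eq_powr[OF assms(1-5)] asym_A_eq_log_moment[OF assms] \<kappa>_def \<beta>_def)
qed

lemma ergodic_capacity_minus_asym_A_tendsto_0:
  assumes "mX > 0" "mY > 0" "OX > 0" "OY > 0" "\<alpha> > 0"
  shows "((\<lambda>\<gamma>. ergodic_capacity mX mY OX OY \<alpha> \<gamma> - asym_A mX mY OX OY \<alpha> \<gamma>) \<longlongrightarrow> 0) at_top"
proof -
  define g where "g = BX_power_pdf mX mY (BX_beta mX mY OX OY)"
  define \<kappa> where "\<kappa> \<gamma> = \<gamma> * C_alpha mX mY OX OY \<alpha> powr (2 / \<alpha>)" for \<gamma>
  define G where "G k = (LINT x:{0<..}|lborel. g x * log 2 (1 + k * x powr (2 / \<alpha>)))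
      - (LINT x:{0<..}|lborel. g x * log 2 (k * x powr (2 / \<alpha>)))" for k
  have \<beta>: "0 \<le> BX_beta mX mY OX OY" "BX_beta mX mY OX OY < 1"
    using BX_beta_bounds[OF assms(1-4)] by simp_all
  have "(G \<longlongrightarrow> 0) at_top"
    unfolding G_def g_def using assms \<beta>
    by (intro tendsto_set_integral_log_one_plus_minus_log set_integral_BX_power_pdf(1)
          set_integrable_BX_power_pdf_ln) (simp_all add: BX_power_pdf_nonneg)
  moreover have "filterlim \<kappa> at_top at_top"
    unfolding \<kappa>_def using C_alpha_pos[OF assms]
    by (intro filterlim_at_top_mult_tendsto_pos[OF tendsto_const] filterlim_ident) simp
  ultimately have "((\<lambda>\<gamma>. G (\<kappa> \<gamma>)) \<longlongrightarrow> 0) at_top" by (rule filterlim_compose)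
  moreover have "\<forall>\<^sub>F \<gamma> in at_top.
      ergodic_capacity mX mY OX OY \<alpha> \<gamma> - asym_A mX mY OX OY \<alpha> \<gamma> = G (\<kappa> \<gamma>)"
    using eventually_gt_at_top[of 0]
  proof eventually_elim
    case (elim \<gamma>)
    then show ?case
      using set_integral_BX_pdf_transfer(2)[OF assms(1-4), of "\<lambda>x. log 2 (1 + \<kappa> \<gamma> * x powr (2 / \<alpha>))"]
        set_integral_BX_pdf_transfer(2)[OF assms(1-4), of "\<lambda>x. log 2 (\<kappa> \<gamma> * x powr (2 / \<alpha>))"]
        set_integral_BX_pdf_log_snr(2)[OF assms elim]
      by (simp add: G_def g_def \<kappa>_def ergodic_capacity_def aBX_snr_eq_powr[OF assms])
  qed
  ultimately show ?thesis by (simp add: tendsto_cong)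
qed

theorem theorem4:
  fixes mX mY OX OY \<alpha> :: real
  assumes "mX > 0" and "mY > 0" and "OX > 0" and "OY > 0" and "\<alpha> > 0"
  shows "(\<forall>\<gamma>b>0.
           set_integrable lborel {0<..}
             (\<lambda>r. BX_pdf mX mY OX OY r * log 2 (aBX_snr mX mY OX OY \<alpha> \<gamma>b r))
         \<and> (LINT r:{0<..}|lborel. BX_pdf mX mY OX OY r * log 2 (aBX_snr mX mY OX OY \<alpha> \<gamma>b r))
             = asym_A mX mY OX OY \<alpha> \<gamma>b)
         \<and> ((\<lambda>\<gamma>b. ergodic_capacity mX mY OX OY \<alpha> \<gamma>b - asym_A mX mY OX OY \<alpha> \<gamma>b)
           \<longlongrightarrow> 0) at_top"
  using set_integral_BX_pdf_log_snr[OF assms] ergodic_capacity_minus_asym_A_tendsto_0[OF assms]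
  by blast

end
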